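(* Let $\mathbf{Y}\in\mathbb{R}^{N\times B}$, $\mathbf{R}\in\mathbb{R}^{M\times B}$, and $\mathbf{A}\in\mathbb{R}^{N\times M}$ with $\mathbf{A}^{T}\mathbf{A}$ nonsingular; let $\mathbf{A}=\mathbf{U}\boldsymbol{\Lambda}\mathbf{V}^{T}$ be a compact singular value decomposition ($\mathbf{U}\in\mathbb{R}^{N\times M}$ with orthonormal columns, $\boldsymbol{\Lambda},\mathbf{V}\in\mathbb{R}^{M\times M}$). Let $\mathbf{S}_{1},\dots,\mathbf{S}_{M}$ be $B\times B$ symmetric positive definite matrices, $\mathbf{Q}=\mathrm{blockdiag}(\mathbf{S}_{1},\dots,\mathbf{S}_{M})+\mathbf{A}^{T}\mathbf{A}\otimes\mathbf{I}_{B}$ and $\mathbf{z}=\mathrm{vec}\big((\mathbf{Y}-\mathbf{A}\mathbf{R})^{T}\mathbf{A}\big)$, and assume $\mathbf{z}\neq\mathbf{0}$. Then $$0<\mathbf{z}^{T}\mathbf{Q}^{-1}\mathbf{z}<\Vert\mathbf{U}^{T}(\mathbf{Y}-\mathbf{A}\mathbf{R})\Vert_{F}^{2}.$$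
   Context: $\mathrm{vec}(\mathbf{X})$ stacks the columns of $\mathbf{X}$; $\otimes$ is the Kronecker product; $\mathrm{blockdiag}(\cdot)$ is the block diagonal matrix with the listed diagonal blocks; $\Vert\cdot\Vert_F$ is the Frobenius norm. *)

theory Defs
  imports "HOL-Analysis.Analysis"
begin

text \<open>vec X stacks the columns of X: index (j,i) = column j, row i.\<close>
definition vecm :: "real^'c^'r \<Rightarrow> real^('c \<times> 'r)" where
  "vecm X = (\<chi> p. X $ snd p $ fst p)"

definition kron :: "real^'c^'r \<Rightarrow> real^'d^'s \<Rightarrow> real^('c \<times> 'd)^('r \<times> 's)" where
  "kron A B = (\<chi> p q. A $ fst p $ fst q * B $ snd p $ snd q)"

definition blockdiag :: "('m::finite \<Rightarrow> real^'b^'b) \<Rightarrow> real^('m \<times> 'b)^('m \<times> 'b)" where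
  "blockdiag S = (\<chi> p q. if fst p = fst q then S (fst p) $ snd p $ snd q else 0)"

definition frob_norm :: "real^'c^'r \<Rightarrow> real" where
  "frob_norm X = sqrt (\<Sum>i\<in>UNIV. \<Sum>j\<in>UNIV. (X $ i $ j)\<^sup>2)"

definition diagonal_mat :: "real^'n^'n \<Rightarrow> bool" where
  "diagonal_mat L \<longleftrightarrow> (\<forall>i j. i \<noteq> j \<longrightarrow> L $ i $ j = 0)"

definition pos_def :: "real^'n^'n \<Rightarrow> bool" where
  "pos_def S \<longleftrightarrow> transpose S = S \<and> (\<forall>x. x \<noteq> 0 \<longrightarrow> x \<bullet> (S *v x) > 0)"

end

theory Submission imports Defs begin

text \<open>With \<open>K = A \<otimes> I\<close> the matrix \<open>Q\<close> is \<open>D + K\<^sup>T K\<close> with \<open>D\<close> positive definite, so the quadratic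
  form of \<open>Q\<close> is positive definite and \<open>x = Q\<^sup>-\<^sup>1 z\<close> gives \<open>z\<^sup>T Q\<^sup>-\<^sup>1 z = x\<^sup>T Q x > 0\<close>.
  The compact SVD yields \<open>X = V \<Lambda>\<^sup>-\<^sup>1 U\<^sup>T (Y - A R)\<close> with \<open>A\<^sup>T A X = A\<^sup>T (Y - A R)\<close>, i.e.
  \<open>K\<^sup>T K y = z\<close> for \<open>y = vec(X\<^sup>T)\<close>. Expanding \<open>0 \<le> |K (x - y)|\<^sup>2\<close> gives
  \<open>z\<^sup>T y \<ge> z\<^sup>T x + x\<^sup>T D x > z\<^sup>T x\<close>, and \<open>z\<^sup>T y = \<parallel>U\<^sup>T (Y - A R)\<parallel>\<^sub>F\<^sup>2\<close> because \<open>A X = U U\<^sup>T (Y - A R)\<close>.\<close>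

lemma sum_UNIV_prod:
  "(\<Sum>p\<in>(UNIV::('a::finite \<times> 'b::finite) set). f p) = (\<Sum>a\<in>UNIV. \<Sum>b\<in>UNIV. f (a, b))"
  by (metis UNIV_Times_UNIV sum.cartesian_product')

lemma if_zero_mult_real:
  "(if P then (a::real) else 0) * b = (if P then a * b else 0)"
  "b * (if P then (a::real) else 0) = (if P then b * a else 0)"
  by simp_all

lemma vecm_inner: "vecm M \<bullet> vecm N = (\<Sum>i\<in>UNIV. \<Sum>j\<in>UNIV. M $ i $ j * N $ i $ j)"
  unfolding vecm_def inner_vec_def sum_UNIV_prod by simp (rule sum.swap)

lemma vecm_inner_transpose: "vecm (transpose M) \<bullet> vecm (transpose N) = vecm M \<bullet> vecm N"
  unfolding vecm_inner transpose_def by simp (rule sum.swap)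

lemma vecm_inner_transpose_mult:
  fixes K :: "real^'m^'n" and M :: "real^'b^'n" and N :: "real^'b^'m"
  shows "vecm (transpose K ** M) \<bullet> vecm N = vecm M \<bullet> vecm (K ** N)"
proof -
  have "vecm (transpose K ** M) \<bullet> vecm N
      = (\<Sum>i\<in>UNIV. \<Sum>j\<in>UNIV. \<Sum>k\<in>UNIV. K $ k $ i * M $ k $ j * N $ i $ j)"
    by (simp add: vecm_inner matrix_matrix_mult_def transpose_def sum_distrib_right)
  also have "\<dots> = (\<Sum>i\<in>UNIV. \<Sum>k\<in>UNIV. \<Sum>j\<in>UNIV. K $ k $ i * M $ k $ j * N $ i $ j)"
    by (rule sum.cong[OF refl], rule sum.swap)
  also have "\<dots> = (\<Sum>k\<in>UNIV. \<Sum>i\<in>UNIV. \<Sum>j\<in>UNIV. K $ k $ i * M $ k $ j * N $ i $ j)"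
    by (rule sum.swap)
  also have "\<dots> = (\<Sum>k\<in>UNIV. \<Sum>j\<in>UNIV. \<Sum>i\<in>UNIV. K $ k $ i * M $ k $ j * N $ i $ j)"
    by (rule sum.cong[OF refl], rule sum.swap)
  also have "\<dots> = vecm M \<bullet> vecm (K ** N)"
    by (simp add: vecm_inner matrix_matrix_mult_def sum_distrib_left ac_simps)
  finally show ?thesis .
qed

lemma vecm_inner_self: "vecm M \<bullet> vecm M = (frob_norm M)\<^sup>2"
  by (simp add: vecm_inner frob_norm_def sum_nonneg power2_eq_square)

lemma kron_mat1_mult_vecm_transpose:
  fixes G :: "real^'m^'k" and X :: "real^'b^'m"
  shows "kron G (mat 1 :: real^'b^'b) *v vecm (transpose X) = vecm (transpose (G ** X))"
  by (simp add: vec_eq_iff kron_def vecm_def matrix_vector_mult_def matrix_matrix_mult_def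
      transpose_def mat_def sum_UNIV_prod if_zero_mult_real sum.delta sum.delta' sum_distrib_left)

lemma kron_transpose_mult_mat1:
  fixes A :: "real^'m^'n"
  shows "kron (transpose A ** A) (mat 1 :: real^'b^'b)
    = transpose (kron A (mat 1 :: real^'b^'b)) ** kron A (mat 1)"
  by (simp add: vec_eq_iff kron_def matrix_matrix_mult_def transpose_def mat_def
      sum_UNIV_prod if_zero_mult_real sum.delta sum.delta' sum_distrib_left)

lemma blockdiag_mult_vec_nth:
  fixes w :: "real^('m::finite \<times> 'b::finite)"
  shows "(blockdiag S *v w) $ (k, b) = (S k *v (\<chi> b. w $ (k, b))) $ b"
  by (simp add: blockdiag_def matrix_vector_mult_def sum_UNIV_prod if_zero_mult_real
      sum.If_cases if_distrib[of "sum _"] sum.delta)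

lemma blockdiag_quadratic_form:
  fixes w :: "real^('m::finite \<times> 'b::finite)"
  shows "w \<bullet> (blockdiag S *v w) = (\<Sum>k\<in>UNIV. (\<chi> b. w $ (k, b)) \<bullet> (S k *v (\<chi> b. w $ (k, b))))"
  by (simp add: inner_vec_def sum_UNIV_prod blockdiag_mult_vec_nth)

lemma blockdiag_pos_quadratic_form:
  fixes w :: "real^('m::finite \<times> 'b::finite)"
  assumes S: "\<And>k v. v \<noteq> 0 \<Longrightarrow> 0 < v \<bullet> (S k *v v)" and "w \<noteq> 0"
  shows "0 < w \<bullet> (blockdiag S *v w)"
proof -
  obtain k b where "w $ (k, b) \<noteq> 0"
    using \<open>w \<noteq> 0\<close> by (metis vec_eq_iff zero_index surj_pair)
  then have "(\<chi> b. w $ (k, b)) \<noteq> 0"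
    by (metis vec_lambda_beta zero_index)
  moreover have "0 \<le> v \<bullet> (S j *v v)" for j v
    using S[of v j] by (cases "v = 0") auto
  ultimately show ?thesis
    unfolding blockdiag_quadratic_form by (intro sum_pos2[where i = k] S) auto
qed

lemma invertible_if_pos_quadratic_form:
  fixes Q :: "real^'n^'n"
  assumes "\<And>w. w \<noteq> 0 \<Longrightarrow> 0 < w \<bullet> (Q *v w)"
  shows "invertible Q"
proof -
  have "\<forall>w. Q *v w = 0 \<longrightarrow> w = 0"
    using assms by (metis inner_zero_right less_irrefl)
  then show ?thesis
    using matrix_left_invertible_ker invertible_left_inverse by blast
qed

lemma matrix_inv_right: "invertible Q \<Longrightarrow> Q ** matrix_inv Q = mat 1"
  unfolding invertible_def matrix_inv_def by (metis (mono_tags, lifting) someI_ex)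

lemma inner_matrix_inv_bounds:
  fixes D :: "real^'n^'n" and K :: "real^'n^'k"
  assumes D: "\<And>w. w \<noteq> 0 \<Longrightarrow> 0 < w \<bullet> (D *v w)"
    and y: "(transpose K ** K) *v y = z" and "z \<noteq> 0"
  defines "x \<equiv> matrix_inv (D + transpose K ** K) *v z"
  shows "0 < z \<bullet> x \<and> z \<bullet> x < z \<bullet> y"
proof -
  define P where "P = transpose K ** K"
  have P: "u \<bullet> (P *v w) = (K *v u) \<bullet> (K *v w)" for u w
    by (metis P_def dot_lmul_matrix inner_commute matrix_vector_mul_assoc transpose_matrix_vector)
  have Q: "u \<bullet> ((D + P) *v u) = u \<bullet> (D *v u) + (K *v u) \<bullet> (K *v u)" for u
    by (simp add: P matrix_vector_mult_add_rdistrib inner_add_right)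
  have "invertible (D + P)"
    by (rule invertible_if_pos_quadratic_form) (simp add: Q D add_pos_nonneg)
  then have Qx: "(D + P) *v x = z"
    by (simp add: x_def P_def matrix_vector_mul_assoc matrix_inv_right)
  then have "x \<noteq> 0"
    using \<open>z \<noteq> 0\<close> by auto
  have zx: "z \<bullet> x = x \<bullet> (D *v x) + (K *v x) \<bullet> (K *v x)"
    using Q[of x] by (simp add: Qx inner_commute)
  have "0 \<le> (K *v (x - y)) \<bullet> (K *v (x - y))"
    by simp
  also have "\<dots> = (K *v x) \<bullet> (K *v x) - 2 * (x \<bullet> z) + z \<bullet> y"
    using P[of x y] P[of y y] y
    by (simp add: P_def matrix_vector_mult_diff_distrib inner_diff_left inner_diff_right inner_commute)
  finally show ?thesis
    using zx D[OF \<open>x \<noteq> 0\<close>] inner_ge_zero[of "K *v x"] inner_commute[of x z] by linarith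
qed

lemma mat1_mult_cancel: "P ** Q = mat 1 \<Longrightarrow> P ** (Q ** C) = (C::real^'a^'b)"
  by (metis matrix_mul_assoc matrix_mul_lid)

lemma compact_svd_mult_pseudo_inverse:
  fixes A U :: "real^'m^'n" and L V :: "real^'m^'m"
  assumes "invertible (transpose A ** A)"
    and U: "transpose U ** U = mat 1" and V: "transpose V ** V = mat 1"
    and A: "A = U ** L ** transpose V"
  shows "A ** (V ** matrix_inv L ** transpose U) = U ** transpose U"
proof -
  have "transpose A ** A = V ** (transpose L ** L) ** transpose V"
    by (simp add: A matrix_transpose_mul matrix_mul_assoc[symmetric] mat1_mult_cancel[OF U])
  then have "det L \<noteq> 0"
    using assms(1) by (simp add: invertible_det_nz det_mul)
  then have L: "L ** matrix_inv L = mat 1"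
    by (simp add: invertible_det_nz matrix_inv_right)
  show ?thesis
    by (simp add: A matrix_mul_assoc[symmetric] mat1_mult_cancel[OF V] mat1_mult_cancel[OF L])
qed

theorem mainTheorem6:
  fixes Y :: "real^'b^'n" and R :: "real^'b^'m" and A :: "real^'m^'n"
    and U :: "real^'m^'n" and L :: "real^'m^'m" and V :: "real^'m^'m"
    and S :: "'m \<Rightarrow> real^'b^'b"
  assumes "invertible (transpose A ** A)"
    and "transpose U ** U = mat 1"
    and "diagonal_mat L" and "\<forall>i. L $ i $ i \<ge> 0"
    and "transpose V ** V = mat 1"
    and "A = U ** L ** transpose V"
    and "\<forall>j. pos_def (S j)"
    and "Q = blockdiag S + kron (transpose A ** A) (mat 1 :: real^'b^'b)"
    and "z = vecm (transpose (Y - A ** R) ** A)"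
    and "z \<noteq> 0"
  shows "0 < z \<bullet> (matrix_inv Q *v z)
    \<and> z \<bullet> (matrix_inv Q *v z) < (frob_norm (transpose U ** (Y - A ** R)))\<^sup>2"
proof -
  define E where "E = Y - A ** R"
  define X where "X = V ** matrix_inv L ** transpose U ** E"
  define K where "K = kron A (mat 1 :: real^'b^'b)"
  have AX: "A ** X = U ** (transpose U ** E)"
    using compact_svd_mult_pseudo_inverse[OF assms(1,2,5,6)]
    by (simp add: X_def matrix_mul_assoc)
  have UUA: "transpose A ** (U ** (transpose U ** E)) = transpose A ** E"
    by (simp add: assms(6) matrix_transpose_mul matrix_mul_assoc[symmetric] mat1_mult_cancel[OF assms(2)])
  have z: "z = vecm (transpose (transpose A ** E))"
    by (simp add: assms(9) E_def matrix_transpose_mul)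
  have "(transpose K ** K) *v vecm (transpose X) = z"
    by (simp add: K_def z kron_transpose_mult_mat1[symmetric] kron_mat1_mult_vecm_transpose
        matrix_mul_assoc[symmetric] AX UUA)
  moreover have "z \<bullet> vecm (transpose X) = (frob_norm (transpose U ** E))\<^sup>2"
  proof -
    have "z \<bullet> vecm (transpose X) = vecm E \<bullet> vecm (U ** (transpose U ** E))"
      by (simp add: z vecm_inner_transpose vecm_inner_transpose_mult AX)
    also have "\<dots> = vecm (transpose U ** E) \<bullet> vecm (transpose U ** E)"
      by (metis inner_commute vecm_inner_transpose_mult)
    finally show ?thesis
      by (simp add: vecm_inner_self)
  qed
  moreover have "Q = blockdiag S + transpose K ** K"
    by (simp add: assms(8) K_def kron_transpose_mult_mat1)
  moreover have "0 < w \<bullet> (blockdiag S *v w)" if "w \<noteq> 0" for w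
    using assms(7) that by (intro blockdiag_pos_quadratic_form) (auto simp: pos_def_def)
  ultimately show ?thesis
    using inner_matrix_inv_bounds[of "blockdiag S" K "vecm (transpose X)" z] assms(10)
    by (simp add: E_def)
qed

end
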